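(* For every integer $n\ge 1$, $$\sum_{\pi\in \mathcal I^C_{2n}(321)}q^{\mathrm{des}(\pi)}=(1+q)^n.$$
   Context: A permutation $\pi\in\mathcal S_m$ is centrosymmetric if $\pi(i)+\pi(m+1-i)=m+1$ for all $i$. $\mathcal I^C_m(321)$ is the set of centrosymmetric involutions in $\mathcal S_m$ avoiding the pattern $321$. $\mathrm{des}(\pi)$ is the number of positions $i\in\{1,\dots,m-1\}$ with $\pi(i)>\pi(i+1)$. *)

theory Defs
  imports "HOL-Combinatorics.Permutations"
begin

definition centrosymmetric :: "nat \<Rightarrow> (nat \<Rightarrow> nat) \<Rightarrow> bool" where
  "centrosymmetric m p \<longleftrightarrow> (\<forall>i\<in>{1..m}. p i + p (m + 1 - i) = m + 1)"

definition involution :: "(nat \<Rightarrow> nat) \<Rightarrow> bool" where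
  "involution p \<longleftrightarrow> p \<circ> p = id"

definition avoids321 :: "nat \<Rightarrow> (nat \<Rightarrow> nat) \<Rightarrow> bool" where
  "avoids321 m p \<longleftrightarrow> \<not> (\<exists>i j k. 1 \<le> i \<and> i < j \<and> j < k \<and> k \<le> m \<and> p i > p j \<and> p j > p k)"

definition cent_inv_321 :: "nat \<Rightarrow> (nat \<Rightarrow> nat) set" where
  "cent_inv_321 m = {p. p permutes {1..m} \<and> involution p \<and> centrosymmetric m p \<and> avoids321 m p}"

definition des :: "nat \<Rightarrow> (nat \<Rightarrow> nat) \<Rightarrow> nat" where
  "des m p = card {i. 1 \<le> i \<and> i \<le> m - 1 \<and> p i > p (i + 1)}"

end

theory Submission
  imports Defs
begin

text \<open>Record each point \<open>i\<close> of an involution \<open>p\<close> as an up step (\<open>i < p i\<close>), a down step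
  (\<open>p i < i\<close>) or a flat step (\<open>p i = i\<close>). For a 321-avoiding involution this word is a path
  that never goes below zero and is flat only at height zero, the descents of \<open>p\<close> are exactly
  its peaks, and \<open>p\<close> is recovered from the word by matching the \<open>k\<close>-th up step with the
  \<open>k\<close>-th down step. Centrosymmetry makes the word of length \<open>2 n\<close> mirror symmetric, so it is
  determined by its first half, which is an arbitrary such path of length \<open>n\<close>; each peak of
  the half counts twice and a final up step once more. A half path can always be extended by
  an up step and by exactly one other step, which creates a peak precisely after an up step;
  this turns into a factor \<open>1 + q\<close> per step.\<close>

datatype step = Up | Down | Flat

fun mirror :: "step \<Rightarrow> step" where
  "mirror Up = Down" | "mirror Down = Up" | "mirror Flat = Flat"

lemma mirror_mirror [simp]: "mirror (mirror x) = x"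
  by (cases x) auto

lemma mirror_eq_iff: "mirror x = y \<longleftrightarrow> x = mirror y"
  by (cases x; cases y) auto

text \<open>A path is stored as a list whose head is its last step, so that paths grow by Cons.\<close>

fun height :: "step list \<Rightarrow> int" where
  "height [] = 0"
| "height (Up # r) = height r + 1"
| "height (Down # r) = height r - 1"
| "height (Flat # r) = height r"

fun admissible :: "step list \<Rightarrow> bool" where
  "admissible [] = True"
| "admissible (x # r) \<longleftrightarrow> admissible r \<and> (x = Flat \<longrightarrow> height r = 0) \<and> (x = Down \<longrightarrow> height r > 0)"

definition ends_up :: "step list \<Rightarrow> bool" where
  "ends_up r \<longleftrightarrow> r \<noteq> [] \<and> hd r = Up"

fun peaks :: "step list \<Rightarrow> nat" where
  "peaks [] = 0"
| "peaks (x # r) = peaks r + (if x = Down \<and> ends_up r then 1 else 0)"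

text \<open>A peak of the first half and its mirror image are two descents; a final Up step
  meets its mirrored Down step in the middle, giving one more.\<close>

definition weight :: "step list \<Rightarrow> nat" where
  "weight r = 2 * peaks r + (if ends_up r then 1 else 0)"

definition half_paths :: "nat \<Rightarrow> step list set" where
  "half_paths n = {r. length r = n \<and> admissible r}"

definition forced_step :: "step list \<Rightarrow> step" where
  "forced_step r = (if height r = 0 then Flat else Down)"

lemma forced_step_ne_Up [simp]: "forced_step r \<noteq> Up" "Up \<noteq> forced_step r"
  by (simp_all add: forced_step_def)

lemma admissible_height_nonneg: "admissible r \<Longrightarrow> height r \<ge> 0"
proof (induction r)
  case (Cons x r)
  then show ?case by (cases x) auto
qed simp

lemma admissible_ends_up_height_pos: "admissible r \<Longrightarrow> ends_up r \<Longrightarrow> height r > 0"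
  by (cases r) (auto simp: ends_up_def dest: admissible_height_nonneg)

lemma admissible_Cons_iff: "admissible (x # r) \<longleftrightarrow> admissible r \<and> (x = Up \<or> x = forced_step r)"
  using admissible_height_nonneg[of r] by (cases x) (auto simp: forced_step_def)

lemma half_paths_0: "half_paths 0 = {[]}"
  by (auto simp: half_paths_def)

lemma half_paths_Suc:
  "half_paths (Suc n) = (\<lambda>r. Up # r) ` half_paths n \<union> (\<lambda>r. forced_step r # r) ` half_paths n"
proof (intro equalityI subsetI)
  fix r' assume "r' \<in> half_paths (Suc n)"
  then obtain x r where "r' = x # r" "r \<in> half_paths n" "x = Up \<or> x = forced_step r"
    by (cases r') (auto simp: half_paths_def admissible_Cons_iff simp del: admissible.simps)
  then show "r' \<in> (\<lambda>r. Up # r) ` half_paths n \<union> (\<lambda>r. forced_step r # r) ` half_paths n"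
    by auto
qed (auto simp: half_paths_def admissible_Cons_iff simp del: admissible.simps)

lemma finite_half_paths: "finite (half_paths n)"
proof (rule finite_subset)
  show "half_paths n \<subseteq> {r. set r \<subseteq> {Up, Down, Flat} \<and> length r = n}"
    by (auto simp: half_paths_def intro: step.exhaust)
  show "finite {r. set r \<subseteq> {Up, Down, Flat} \<and> length r = n}"
    by (rule finite_lists_length_eq) simp
qed

lemma sum_half_paths_Suc:
  "(\<Sum>r\<in>half_paths (Suc n). f r)
     = (\<Sum>r\<in>half_paths n. f (Up # r)) + (\<Sum>r\<in>half_paths n. f (forced_step r # r))"
proof -
  have "(\<lambda>r. Up # r) ` half_paths n \<inter> (\<lambda>r. forced_step r # r) ` half_paths n = {}"
    by auto
  then have "(\<Sum>r\<in>half_paths (Suc n). f r)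
      = (\<Sum>r\<in>(\<lambda>r. Up # r) ` half_paths n. f r) + (\<Sum>r\<in>(\<lambda>r. forced_step r # r) ` half_paths n. f r)"
    unfolding half_paths_Suc by (intro sum.union_disjoint) (auto simp: finite_half_paths)
  also have "\<dots> = (\<Sum>r\<in>half_paths n. f (Up # r)) + (\<Sum>r\<in>half_paths n. f (forced_step r # r))"
    by (simp add: sum.reindex inj_on_def)
  finally show ?thesis .
qed

lemma sum_weight_half_paths:
  fixes q :: "'a::comm_ring_1"
  shows "(\<Sum>r\<in>half_paths n. q ^ weight r) = (1 + q) ^ n"
proof -
  define ending_up where
    "ending_up n = (\<Sum>r\<in>half_paths n. if ends_up r then q ^ (2 * peaks r) else 0)" for n
  define other where
    "other n = (\<Sum>r\<in>half_paths n. if ends_up r then 0 else q ^ (2 * peaks r))" for n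
  have total: "(\<Sum>r\<in>half_paths n. q ^ weight r) = q * ending_up n + other n" for n
    unfolding ending_up_def other_def sum_distrib_left sum.distrib[symmetric]
    by (rule sum.cong) (auto simp: weight_def power_add mult.commute)
  have ending_up_Suc: "ending_up (Suc n) = ending_up n + other n" for n
    unfolding ending_up_def other_def sum_half_paths_Suc sum.distrib[symmetric]
    by (auto simp: ends_up_def intro!: sum.cong)
  have forced_peaks: "q ^ (2 * peaks (forced_step r # r))
      = q\<^sup>2 * (if ends_up r then q ^ (2 * peaks r) else 0) + (if ends_up r then 0 else q ^ (2 * peaks r))"
    if "r \<in> half_paths n" for r n
    using that admissible_ends_up_height_pos[of r]
    by (auto simp: half_paths_def forced_step_def power_add power_mult mult.commute)
  have other_Suc: "other (Suc n) = q\<^sup>2 * ending_up n + other n" for n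
  proof -
    have "other (Suc n) = (\<Sum>r\<in>half_paths n. q ^ (2 * peaks (forced_step r # r)))"
      unfolding other_def sum_half_paths_Suc by (simp add: ends_up_def)
    also have "\<dots> = q\<^sup>2 * ending_up n + other n"
      unfolding ending_up_def other_def sum_distrib_left sum.distrib[symmetric]
      by (intro sum.cong refl forced_peaks)
    finally show ?thesis .
  qed
  have "q * ending_up n + other n = (1 + q) ^ n"
  proof (induction n)
    case 0
    then show ?case by (simp add: ending_up_def other_def half_paths_0 ends_up_def)
  next
    case (Suc n)
    have "q * ending_up (Suc n) + other (Suc n) = (1 + q) * (q * ending_up n + other n)"
      unfolding ending_up_Suc other_Suc by (simp add: algebra_simps power2_eq_square)
    then show ?case using Suc by simp
  qed
  then show ?thesis using total by simp
qed

fun word :: "(nat \<Rightarrow> step) \<Rightarrow> nat \<Rightarrow> step list" where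
  "word h 0 = []"
| "word h (Suc k) = h (Suc k) # word h k"

fun occurrences :: "(nat \<Rightarrow> step) \<Rightarrow> step \<Rightarrow> nat \<Rightarrow> nat" where
  "occurrences h x 0 = 0"
| "occurrences h x (Suc k) = occurrences h x k + (if h (Suc k) = x then 1 else 0)"

definition height_at :: "(nat \<Rightarrow> step) \<Rightarrow> nat \<Rightarrow> int" where
  "height_at h k = int (occurrences h Up k) - int (occurrences h Down k)"

definition peak_positions :: "(nat \<Rightarrow> step) \<Rightarrow> nat \<Rightarrow> nat set" where
  "peak_positions h k = {i. 1 \<le> i \<and> Suc i \<le> k \<and> h i = Up \<and> h (Suc i) = Down}"

definition mirror_symmetric :: "nat \<Rightarrow> (nat \<Rightarrow> step) \<Rightarrow> bool" where
  "mirror_symmetric m h \<longleftrightarrow> (\<forall>i\<in>{1..m}. h (m + 1 - i) = mirror (h i))"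

lemma mirror_symmetricD: "mirror_symmetric m h \<Longrightarrow> 1 \<le> i \<Longrightarrow> i \<le> m \<Longrightarrow> h (m + 1 - i) = mirror (h i)"
  by (simp add: mirror_symmetric_def)

lemma height_at_0 [simp]: "height_at h 0 = 0"
  by (simp add: height_at_def)

lemma height_at_Suc:
  "height_at h (Suc k) = height_at h k + (case h (Suc k) of Up \<Rightarrow> 1 | Down \<Rightarrow> -1 | Flat \<Rightarrow> 0)"
  by (cases "h (Suc k)") (auto simp: height_at_def)

lemma height_word: "height (word h k) = height_at h k"
  by (induction k) (auto simp: height_at_Suc split: step.split)

lemma admissible_word_iff:
  "admissible (word h k) \<longleftrightarrow>
     (\<forall>i\<le>k. height_at h i \<ge> 0) \<and> (\<forall>i\<in>{1..k}. h i = Flat \<longrightarrow> height_at h i = 0)"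
proof (induction k)
  case (Suc k)
  have "(\<forall>i\<le>Suc k. height_at h i \<ge> 0) \<longleftrightarrow> (\<forall>i\<le>k. height_at h i \<ge> 0) \<and> height_at h (Suc k) \<ge> 0"
    by (auto simp: le_Suc_eq)
  moreover have "(\<forall>i\<in>{1..Suc k}. h i = Flat \<longrightarrow> height_at h i = 0) \<longleftrightarrow>
      (\<forall>i\<in>{1..k}. h i = Flat \<longrightarrow> height_at h i = 0) \<and> (h (Suc k) = Flat \<longrightarrow> height_at h (Suc k) = 0)"
    by (auto simp: le_Suc_eq)
  ultimately show ?case
    unfolding word.simps admissible.simps Suc height_word
    by (cases "h (Suc k)") (auto simp: height_at_Suc)
qed simp

lemma length_word [simp]: "length (word h k) = k"
  by (induction k) auto

lemma word_cong: "(\<And>i. 1 \<le> i \<Longrightarrow> i \<le> k \<Longrightarrow> h i = h' i) \<Longrightarrow> word h k = word h' k"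
  by (induction k) auto

lemma word_eq_imp_eq: "word h k = word h' k \<Longrightarrow> 1 \<le> i \<Longrightarrow> i \<le> k \<Longrightarrow> h i = h' i"
  by (induction k) (auto simp: le_Suc_eq)

lemma ends_up_word: "ends_up (word h k) \<longleftrightarrow> 1 \<le> k \<and> h k = Up"
  by (cases k) (auto simp: ends_up_def)

lemma finite_peak_positions: "finite (peak_positions h k)"
  by (auto simp: peak_positions_def intro: finite_subset[of _ "{..k}"])

lemma peaks_word: "peaks (word h k) = card (peak_positions h k)"
proof (induction k)
  case (Suc k)
  have "peak_positions h (Suc k) =
      peak_positions h k \<union> (if 1 \<le> k \<and> h k = Up \<and> h (Suc k) = Down then {k} else {})"
    by (auto simp: peak_positions_def le_Suc_eq)
  moreover have "k \<notin> peak_positions h k"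
    by (simp add: peak_positions_def)
  ultimately show ?case
    using Suc by (simp add: ends_up_word finite_peak_positions)
qed (simp add: peak_positions_def)

lemma occurrences_mono: "k \<le> k' \<Longrightarrow> occurrences h x k \<le> occurrences h x k'"
  by (induction k' rule: dec_induct) auto

lemma occurrences_strict_mono: "k < k' \<Longrightarrow> h k' = x \<Longrightarrow> occurrences h x k < occurrences h x k'"
  using occurrences_mono[of k "k' - 1" h x] by (cases k') auto

lemma occurrences_eq_imp_eq:
  "h j = x \<Longrightarrow> h j' = x \<Longrightarrow> occurrences h x j = occurrences h x j' \<Longrightarrow> j = j'"
  using occurrences_strict_mono[of j j' h x] occurrences_strict_mono[of j' j h x]
  by (metis nat_neq_iff less_irrefl)

lemma least_occurrences_reached:
  assumes "1 \<le> c" "c \<le> occurrences h x k"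
  defines "j \<equiv> LEAST j. c \<le> occurrences h x j"
  shows "1 \<le> j" "j \<le> k" "h j = x" "occurrences h x j = c"
proof -
  have "c \<le> occurrences h x j" "j \<le> k"
    unfolding j_def using assms(2) by (auto intro: LeastI Least_le)
  moreover have "j \<noteq> 0"
    using \<open>c \<le> occurrences h x j\<close> assms(1) by (cases j) auto
  moreover have "\<not> c \<le> occurrences h x (j - 1)"
    using \<open>j \<noteq> 0\<close> not_less_Least[of "j - 1" "\<lambda>j. c \<le> occurrences h x j"] by (simp add: j_def)
  ultimately show "1 \<le> j" "j \<le> k" "h j = x" "occurrences h x j = c"
    by (cases j; auto split: if_splits)+
qed

lemma occurrences_eq_card: "occurrences h x k = card {i\<in>{1..k}. h i = x}"
proof (induction k)
  case (Suc k)
  have "{i\<in>{1..Suc k}. h i = x} = {i\<in>{1..k}. h i = x} \<union> (if h (Suc k) = x then {Suc k} else {})"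
    by (auto simp: le_Suc_eq)
  then show ?case
    using Suc by auto
qed simp

lemma occurrences_reflect:
  assumes "mirror_symmetric m h" "k \<le> m"
  shows "occurrences h x (m - k) + occurrences h (mirror x) k = occurrences h x m"
  using assms(2)
proof (induction k)
  case (Suc k)
  have "m - k = Suc (m - Suc k)"
    using Suc.prems by simp
  moreover have "h (m - k) = mirror (h (Suc k))"
    using mirror_symmetricD[OF assms(1), of "Suc k"] Suc.prems by simp
  then have "h (m - k) = x \<longleftrightarrow> h (Suc k) = mirror x"
    by (simp add: mirror_eq_iff)
  ultimately show ?case
    using Suc by simp
qed simp

lemma card_peak_positions_mirror_symmetric:
  assumes sym: "mirror_symmetric (2 * n) h" and "n \<ge> 1"
  shows "card (peak_positions h (2 * n)) = 2 * card (peak_positions h n) + (if h n = Up then 1 else 0)"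
proof -
  let ?reflect = "\<lambda>i. 2 * n - i"
  note h_reflect = mirror_symmetricD[OF sym]
  define upper where "upper = {i\<in>peak_positions h (2 * n). n < i}"
  have middle: "h (Suc n) = mirror (h n)"
    using h_reflect[of n] \<open>n \<ge> 1\<close> by simp
  have split: "peak_positions h (2 * n) =
      peak_positions h n \<union> (if h n = Up then {n} else {}) \<union> upper"
    using middle \<open>n \<ge> 1\<close> by (auto simp: peak_positions_def upper_def mirror_eq_iff le_less)
      (metis linorder_neqE_nat not_less_eq)
  have upper_image: "upper = ?reflect ` peak_positions h n"
  proof (intro equalityI subsetI)
    fix i assume "i \<in> upper"
    then have "2 * n - i \<in> peak_positions h n" "i = ?reflect (2 * n - i)"
      using h_reflect[of i] h_reflect[of "Suc i"] by (auto simp: upper_def peak_positions_def Suc_diff_le)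
    then show "i \<in> ?reflect ` peak_positions h n"
      by blast
  next
    fix i assume "i \<in> ?reflect ` peak_positions h n"
    then obtain j where "i = 2 * n - j" "j \<in> peak_positions h n"
      by blast
    then show "i \<in> upper"
      using h_reflect[of j] h_reflect[of "Suc j"] by (auto simp: upper_def peak_positions_def Suc_diff_le)
  qed
  have "inj_on ?reflect (peak_positions h n)"
    by (rule inj_onI) (auto simp: peak_positions_def)
  then have "card upper = card (peak_positions h n)"
    by (simp add: upper_image card_image)
  moreover have "finite upper"
    using finite_peak_positions by (simp add: upper_def)
  moreover have "peak_positions h n \<inter> (if h n = Up then {n} else {}) = {}"
    "(peak_positions h n \<union> (if h n = Up then {n} else {})) \<inter> upper = {}"
    by (auto simp: peak_positions_def upper_def)
  ultimately show ?thesis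
    unfolding split by (simp add: card_Un_disjoint finite_peak_positions)
qed

definition step_type :: "(nat \<Rightarrow> nat) \<Rightarrow> nat \<Rightarrow> step" where
  "step_type p i = (if i < p i then Up else if p i < i then Down else Flat)"

lemma step_type_Up_iff: "step_type p i = Up \<longleftrightarrow> i < p i"
  by (simp add: step_type_def)

lemma step_type_Down_iff: "step_type p i = Down \<longleftrightarrow> p i < i"
  by (simp add: step_type_def)

lemma step_type_Flat_iff: "step_type p i = Flat \<longleftrightarrow> p i = i"
  by (auto simp: step_type_def)

locale involution321 =
  fixes m :: nat and p :: "nat \<Rightarrow> nat"
  assumes p_permutes: "p permutes {1..m}"
    and p_involution: "involution p"
    and p_avoids321: "avoids321 m p"
begin

lemma p_p [simp]: "p (p i) = i"
  using p_involution unfolding involution_def by (metis comp_apply id_apply)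

lemma p_eq_iff: "p i = p j \<longleftrightarrow> i = j"
  by (metis p_p)

lemma moved_in_range: "p i \<noteq> i \<Longrightarrow> 1 \<le> i \<and> i \<le> m \<and> 1 \<le> p i \<and> p i \<le> m"
  using permutes_not_in[OF p_permutes] permutes_in_image[OF p_permutes] by fastforce

lemma no_321: "1 \<le> i \<Longrightarrow> i < j \<Longrightarrow> j < k \<Longrightarrow> k \<le> m \<Longrightarrow> p j < p i \<Longrightarrow> p k < p j \<Longrightarrow> False"
  using p_avoids321 unfolding avoids321_def by blast

lemma excedance_values_increasing:
  assumes "i < j" "i < p i" "j < p j"
  shows "p i < p j"
proof (rule ccontr)
  assume "\<not> p i < p j"
  then have "p j < p i"
    using assms(1) p_eq_iff[of i j] by auto
  then show False
    using no_321[of i j "p j"] assms moved_in_range[of i] moved_in_range[of j] by auto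
qed

lemma deficiency_values_increasing:
  assumes "i < j" "p i < i" "p j < j"
  shows "p i < p j"
proof (rule ccontr)
  assume "\<not> p i < p j"
  then have "p j < p i"
    using assms(1) p_eq_iff[of i j] by auto
  then show False
    using no_321[of "p j" "p i" i] assms moved_in_range[of i] moved_in_range[of j] by auto
qed

lemma excedance_value_below_fixed_point:
  assumes "i < p i" "i < f" "p f = f"
  shows "p i < f"
proof (rule ccontr)
  assume "\<not> p i < f"
  moreover have "p i \<noteq> f"
    using assms p_eq_iff[of i f] by auto
  ultimately show False
    using no_321[of i f "p i"] assms moved_in_range[of i] by auto
qed

lemma deficiency_value_above_fixed_point:
  assumes "p i < i" "f < i" "p f = f"
  shows "f < p i"
proof (rule ccontr)
  assume "\<not> f < p i"
  moreover have "p i \<noteq> f"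
    using assms p_eq_iff[of i f] by auto
  ultimately show False
    using excedance_value_below_fixed_point[of "p i" f] assms by simp
qed

lemma occurrences_Down_le_Up: "occurrences (step_type p) Down k \<le> occurrences (step_type p) Up k"
proof -
  have "card {i\<in>{1..k}. step_type p i = Down} \<le> card {i\<in>{1..k}. step_type p i = Up}"
  proof (rule card_inj_on_le[of p])
    show "inj_on p {i\<in>{1..k}. step_type p i = Down}"
      by (simp add: inj_on_def p_eq_iff)
    show "p ` {i\<in>{1..k}. step_type p i = Down} \<subseteq> {i\<in>{1..k}. step_type p i = Up}"
      using moved_in_range by (force simp: step_type_Up_iff step_type_Down_iff)
  qed simp
  then show ?thesis
    by (simp add: occurrences_eq_card)
qed

lemma occurrences_Up_le_Down_at_fixed_point:
  assumes "p f = f"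
  shows "occurrences (step_type p) Up f \<le> occurrences (step_type p) Down f"
proof -
  have "card {i\<in>{1..f}. step_type p i = Up} \<le> card {i\<in>{1..f}. step_type p i = Down}"
  proof (rule card_inj_on_le[of p])
    show "inj_on p {i\<in>{1..f}. step_type p i = Up}"
      by (simp add: inj_on_def p_eq_iff)
    show "p ` {i\<in>{1..f}. step_type p i = Up} \<subseteq> {i\<in>{1..f}. step_type p i = Down}"
      using assms excedance_value_below_fixed_point moved_in_range
      by (fastforce simp: step_type_Up_iff step_type_Down_iff le_less)
  qed simp
  then show ?thesis
    by (simp add: occurrences_eq_card)
qed

lemma admissible_word_step_type: "admissible (word (step_type p) k)"
  unfolding admissible_word_iff height_at_def
  using occurrences_Down_le_Up occurrences_Up_le_Down_at_fixed_point
  by (auto simp: step_type_Flat_iff) (metis of_nat_le_iff antisym)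

lemma descent_iff_peak:
  assumes "1 \<le> i" "Suc i \<le> m"
  shows "p (Suc i) < p i \<longleftrightarrow> step_type p i = Up \<and> step_type p (Suc i) = Down"
proof
  assume descent: "p (Suc i) < p i"
  consider "i < p i" | "p i = i" | "p i < i"
    by linarith
  then show "step_type p i = Up \<and> step_type p (Suc i) = Down"
  proof cases
    case 1
    then have "\<not> Suc i < p (Suc i)" "p (Suc i) \<noteq> Suc i"
      using excedance_values_increasing[of i "Suc i"] excedance_value_below_fixed_point[of i "Suc i"]
        descent by auto
    then show ?thesis
      using 1 by (auto simp: step_type_Up_iff step_type_Down_iff)
  next
    case 2
    then show ?thesis
      using deficiency_value_above_fixed_point[of "Suc i" i] descent by auto
  next
    case 3
    then show ?thesis
      using deficiency_values_increasing[of i "Suc i"] descent by auto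
  qed
qed (auto simp: step_type_Up_iff step_type_Down_iff)

end

text \<open>The excedance \<open>i' = s (p i)\<close> of \<open>s\<close> has the same value as \<open>i\<close> has under \<open>p\<close>;
  comparing \<open>i'\<close> with \<open>i\<close> shows \<open>s i \<le> p i\<close>.\<close>

lemma involution321_excedance_value_le:
  assumes p: "involution321 m p" and s: "involution321 m s"
    and same_steps: "\<And>k. step_type p k = step_type s k"
    and agree_below: "\<And>k. k < i \<Longrightarrow> k < p k \<Longrightarrow> p k = s k"
    and excedance: "i < p i"
  shows "s i \<le> p i"
proof (rule ccontr)
  interpret P: involution321 m p by (rule p)
  interpret S: involution321 m s by (rule s)
  assume "\<not> s i \<le> p i"
  define i' where "i' = s (p i)"
  have "s (p i) < p i"
    using same_steps[of "p i"] excedance step_type_Down_iff P.p_p by metis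
  then have excedance': "i' < s i'"
    by (simp add: i'_def)
  consider "i' < i" | "i' = i" | "i < i'"
    by linarith
  then show False
  proof cases
    case 1
    then have "p i' = p i"
      using agree_below[of i'] excedance' same_steps[of i'] step_type_Up_iff
      by (metis S.p_p i'_def)
    then show False
      using 1 by (simp add: P.p_eq_iff)
  next
    case 2
    then show False
      using \<open>\<not> s i \<le> p i\<close> by (metis S.p_p i'_def order_refl)
  next
    case 3
    have "i < s i"
      using same_steps[of i] excedance step_type_Up_iff by metis
    then have "s i < s i'"
      using S.excedance_values_increasing[OF 3 _ excedance'] by simp
    then show False
      using \<open>\<not> s i \<le> p i\<close> by (simp add: i'_def)
  qed
qed

lemma involution321_eq_if_step_type_eq:
  assumes p: "involution321 m p" and s: "involution321 m s"
    and same_steps: "\<And>k. step_type p k = step_type s k"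
  shows "p = s"
proof -
  interpret S: involution321 m s by (rule s)
  have excedances: "i < p i \<Longrightarrow> p i = s i" for i
  proof (induction i rule: less_induct)
    case (less i)
    have "s i \<le> p i"
      using involution321_excedance_value_le[OF p s same_steps less.IH less.prems] .
    moreover have "p i \<le> s i"
    proof (rule involution321_excedance_value_le[OF s p])
      show "s k = p k" if "k < i" "k < s k" for k
        using less.IH[OF that(1)] that(2) same_steps[of k] step_type_Up_iff by metis
      show "i < s i"
        using same_steps[of i] less.prems step_type_Up_iff by metis
    qed (use same_steps in simp)
    ultimately show ?case
      by simp
  qed
  show ?thesis
  proof
    fix i
    consider "i < p i" | "p i < i" | "p i = i"
      by linarith
    then show "p i = s i"
    proof cases
      case 1
      then show ?thesis
        using excedances by blast
    next
      case 2
      then have "s (p i) = i"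
        using excedances[of "p i"] involution321.p_p[OF p] by simp
      then show ?thesis
        by (metis S.p_p)
    next
      case 3
      then show ?thesis
        using same_steps[of i] step_type_Flat_iff by metis
    qed
  qed
qed

text \<open>The \<open>k\<close>-th Up step is matched with the \<open>k\<close>-th Down step (not with the Down step
  closing it as a Dyck path would); this first-in-first-out matching makes the values at
  excedances and at deficiencies increase.\<close>

definition mate :: "nat \<Rightarrow> (nat \<Rightarrow> step) \<Rightarrow> nat \<Rightarrow> nat" where
  "mate m w i =
     (if i \<in> {1..m} \<and> w i = Up then LEAST j. occurrences w Up i \<le> occurrences w Down j
      else if i \<in> {1..m} \<and> w i = Down then LEAST j. occurrences w Down i \<le> occurrences w Up j
      else i)"

lemma mate_outside: "i \<notin> {1..m} \<Longrightarrow> mate m w i = i"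
  by (auto simp: mate_def)

lemma mate_Flat: "w i = Flat \<Longrightarrow> mate m w i = i"
  by (simp add: mate_def)

locale balanced_path =
  fixes m :: nat and w :: "nat \<Rightarrow> step"
  assumes height_nonneg: "\<And>i. i \<le> m \<Longrightarrow> height_at w i \<ge> 0"
    and Flat_height: "\<And>i. 1 \<le> i \<Longrightarrow> i \<le> m \<Longrightarrow> w i = Flat \<Longrightarrow> height_at w i = 0"
    and balanced: "occurrences w Up m = occurrences w Down m"
begin

lemma mate_Up:
  assumes "1 \<le> i" "i \<le> m" "w i = Up"
  shows "1 \<le> mate m w i \<and> mate m w i \<le> m \<and> w (mate m w i) = Down
    \<and> occurrences w Down (mate m w i) = occurrences w Up i \<and> i < mate m w i"
proof -
  let ?c = "occurrences w Up i"
  have c: "1 \<le> ?c" "?c \<le> occurrences w Down m"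
    using occurrences_strict_mono[of 0 i w Up] occurrences_mono[of i m w Up] assms balanced by auto
  have j: "mate m w i = (LEAST j. ?c \<le> occurrences w Down j)"
    using assms by (simp add: mate_def)
  note reached = least_occurrences_reached[OF c, folded j]
  have "i < mate m w i"
  proof (rule ccontr)
    assume "\<not> i < mate m w i"
    then have "height_at w i \<le> 0"
      using occurrences_mono[of "mate m w i" i w Down] reached by (simp add: height_at_def)
    moreover have "height_at w (i - 1) \<ge> 0"
      using height_nonneg[of "i - 1"] assms by simp
    ultimately show False
      using height_at_Suc[of w "i - 1"] assms by simp
  qed
  then show ?thesis
    using reached by simp
qed

lemma mate_Down:
  assumes "1 \<le> i" "i \<le> m" "w i = Down"
  shows "1 \<le> mate m w i \<and> mate m w i \<le> m \<and> w (mate m w i) = Up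
    \<and> occurrences w Up (mate m w i) = occurrences w Down i \<and> mate m w i < i"
proof -
  let ?c = "occurrences w Down i"
  have c: "1 \<le> ?c" "?c \<le> occurrences w Up i"
    using occurrences_strict_mono[of 0 i w Down] height_nonneg[of i] assms
    by (auto simp: height_at_def)
  have j: "mate m w i = (LEAST j. ?c \<le> occurrences w Up j)"
    using assms by (simp add: mate_def)
  note reached = least_occurrences_reached[OF c, folded j]
  have "mate m w i \<noteq> i"
    using reached assms by auto
  then show ?thesis
    using reached assms by simp
qed

lemma mate_mate [simp]: "mate m w (mate m w i) = i"
proof (cases "i \<in> {1..m}")
  case True
  show ?thesis
  proof (cases "w i")
    case Up
    then show ?thesis
      using True mate_Up[of i] mate_Down[of "mate m w i"]
        occurrences_eq_imp_eq[of w "mate m w (mate m w i)" Up i] by auto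
  next
    case Down
    then show ?thesis
      using True mate_Down[of i] mate_Up[of "mate m w i"]
        occurrences_eq_imp_eq[of w "mate m w (mate m w i)" Down i] by auto
  next
    case Flat
    then show ?thesis
      by (simp add: mate_Flat)
  qed
qed (simp add: mate_outside)

lemma mate_permutes: "mate m w permutes {1..m}"
  unfolding permutes_def
proof (intro conjI allI impI)
  show "\<exists>!x. mate m w x = y" for y
    by (rule ex1I[of _ "mate m w y"]) (simp, metis mate_mate)
qed (simp add: mate_outside)

lemma involution_mate: "involution (mate m w)"
  by (simp add: involution_def fun_eq_iff)

lemma step_type_mate: "1 \<le> i \<Longrightarrow> i \<le> m \<Longrightarrow> step_type (mate m w) i = w i"
  using mate_Up[of i] mate_Down[of i] mate_Flat[of w i] by (cases "w i") (auto simp: step_type_def)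

lemma mate_increasing_Up:
  assumes "1 \<le> i" "i < i'" "i' \<le> m" "w i = Up" "w i' \<noteq> Down"
  shows "mate m w i < mate m w i'"
proof (cases "w i'")
  case Up
  have "occurrences w Up i < occurrences w Up i'"
    using occurrences_strict_mono[of i i' w Up] assms Up by simp
  then have "occurrences w Down (mate m w i) < occurrences w Down (mate m w i')"
    using mate_Up[of i] mate_Up[of i'] assms Up by simp
  then show ?thesis
    using occurrences_mono[of "mate m w i'" "mate m w i" w Down] by (meson not_le)
next
  case Flat
  have "\<not> i' < mate m w i"
  proof
    assume "i' < mate m w i"
    then have "occurrences w Down i' < occurrences w Up i"
      using occurrences_strict_mono[of i' "mate m w i" w Down] mate_Up[of i] assms by simp
    moreover have "occurrences w Up i \<le> occurrences w Up i'"
      using occurrences_mono assms by simp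
    ultimately show False
      using Flat_height[of i'] assms Flat by (simp add: height_at_def)
  qed
  moreover have "mate m w i \<noteq> i'"
    using mate_Up[of i] assms Flat by auto
  ultimately show ?thesis
    using mate_Flat[of w, OF Flat] by simp
qed (use assms in simp)

lemma mate_increasing:
  assumes "1 \<le> i" "i < i'" "i' \<le> m" "w i = Down \<longleftrightarrow> w i' = Down"
  shows "mate m w i < mate m w i'"
proof (cases "w i")
  case Up
  then show ?thesis
    using mate_increasing_Up assms by auto
next
  case Down
  have "occurrences w Down i < occurrences w Down i'"
    using occurrences_strict_mono[of i i' w Down] assms Down by simp
  then have "occurrences w Up (mate m w i) < occurrences w Up (mate m w i')"
    using mate_Down[of i] mate_Down[of i'] assms Down by simp
  then show ?thesis
    using occurrences_mono[of "mate m w i'" "mate m w i" w Up] by (meson not_le)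
next
  case Flat
  then have "w i' = Up \<or> w i' = Flat"
    using assms by (cases "w i'") auto
  then show ?thesis
    using mate_Up[of i'] assms mate_Flat[of w, OF Flat] mate_Flat[of w i'] by auto
qed

lemma avoids321_mate: "avoids321 m (mate m w)"
  unfolding avoids321_def
proof
  assume "\<exists>i j k. 1 \<le> i \<and> i < j \<and> j < k \<and> k \<le> m \<and> mate m w j < mate m w i \<and> mate m w k < mate m w j"
  then obtain i j k where ijk: "1 \<le> i" "i < j" "j < k" "k \<le> m"
    and decreasing: "mate m w j < mate m w i" "mate m w k < mate m w j"
    by blast
  consider "w i = Down \<longleftrightarrow> w j = Down" | "w j = Down \<longleftrightarrow> w k = Down" | "w i = Down \<longleftrightarrow> w k = Down"
    by blast
  then show False
  proof cases
    case 1
    then show False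
      using mate_increasing[of i j] ijk decreasing by simp
  next
    case 2
    then show False
      using mate_increasing[of j k] ijk decreasing by simp
  next
    case 3
    then show False
      using mate_increasing[of i k] ijk decreasing by simp
  qed
qed

text \<open>Mirror symmetry sends the \<open>k\<close>-th Up step to the \<open>k\<close>-th Down step counted from the right.\<close>

lemma mate_reflect_Up:
  assumes sym: "mirror_symmetric m w" and i: "1 \<le> i" "i \<le> m" "w i = Up"
  shows "mate m w i + mate m w (m + 1 - i) = m + 1"
proof -
  define j where "j = mate m w i"
  have j: "1 \<le> j" "j \<le> m" "w j = Down" "occurrences w Down j = occurrences w Up i"
    using mate_Up[OF i] by (simp_all add: j_def)
  define i' where "i' = m + 1 - i"
  have i': "1 \<le> i'" "i' \<le> m" "w i' = Down"
    using mirror_symmetricD[OF sym, of i] i by (simp_all add: i'_def)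
  have "m - (j - 1) = m + 1 - j" "m - (i - 1) = i'"
    using i j by (auto simp: i'_def)
  then have "occurrences w Up (m + 1 - j) + occurrences w Down (j - 1) = occurrences w Up m"
    "occurrences w Down i' + occurrences w Up (i - 1) = occurrences w Down m"
    using occurrences_reflect[OF sym, of "j - 1" Up] occurrences_reflect[OF sym, of "i - 1" Down] i j
    by simp_all
  moreover have "occurrences w Down j = occurrences w Down (j - 1) + 1"
    "occurrences w Up i = occurrences w Up (i - 1) + 1"
    using i j occurrences.simps(2)[of w Down "j - 1"] occurrences.simps(2)[of w Up "i - 1"] by simp_all
  ultimately have "occurrences w Up (m + 1 - j) = occurrences w Down i'"
    using balanced j(4) by linarith
  moreover have "w (m + 1 - j) = Up"
    using mirror_symmetricD[OF sym, of j] j by simp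
  ultimately have "mate m w i' = m + 1 - j"
    using mate_Down[OF i'] occurrences_eq_imp_eq[of w "mate m w i'" Up "m + 1 - j"] by simp
  then show ?thesis
    using j unfolding i'_def j_def by simp
qed

lemma centrosymmetric_mate:
  assumes sym: "mirror_symmetric m w"
  shows "centrosymmetric m (mate m w)"
  unfolding centrosymmetric_def
proof
  fix i assume i: "i \<in> {1..m}"
  show "mate m w i + mate m w (m + 1 - i) = m + 1"
  proof (cases "w i")
    case Up
    then show ?thesis
      using mate_reflect_Up[OF sym, of i] i by simp
  next
    case Down
    then have "w (m + 1 - i) = Up"
      using mirror_symmetricD[OF sym, of i] i by simp
    moreover have "1 \<le> m + 1 - i" "m + 1 - i \<le> m"
      using i by auto
    ultimately show ?thesis
      using mate_reflect_Up[OF sym, of "m + 1 - i"] i by (simp add: add.commute)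
  next
    case Flat
    then have "w (m + 1 - i) = Flat"
      using mirror_symmetricD[OF sym, of i] i by simp
    then show ?thesis
      using mate_Flat Flat i by simp
  qed
qed

end

lemma height_at_reflect:
  assumes "mirror_symmetric m h" "k \<le> m"
  shows "height_at h (m - k) = height_at h m + height_at h k"
  using occurrences_reflect[OF assms, of Up] occurrences_reflect[OF assms, of Down]
  by (simp add: height_at_def)

lemma balanced_path_if_mirror_symmetric:
  assumes sym: "mirror_symmetric (2 * n) h" and admissible: "admissible (word h n)"
  shows "balanced_path (2 * n) h"
proof -
  have nonneg: "i \<le> n \<Longrightarrow> height_at h i \<ge> 0"
    and Flat_low: "1 \<le> i \<Longrightarrow> i \<le> n \<Longrightarrow> h i = Flat \<Longrightarrow> height_at h i = 0" for i
    using admissible unfolding admissible_word_iff by auto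
  have end_height: "height_at h (2 * n) = 0"
    using height_at_reflect[OF sym, of n] by simp
  have reflect: "k \<le> 2 * n \<Longrightarrow> height_at h (2 * n - k) = height_at h k" for k
    using height_at_reflect[OF sym, of k] end_height by simp
  show ?thesis
  proof
    show "height_at h i \<ge> 0" if "i \<le> 2 * n" for i
      using nonneg[of i] nonneg[of "2 * n - i"] reflect[of "2 * n - i"] that
      by (cases "i \<le> n") auto
    show "height_at h i = 0" if i: "1 \<le> i" "i \<le> 2 * n" "h i = Flat" for i
    proof (cases "i \<le> n")
      case False
      define k where "k = 2 * n + 1 - i"
      have k: "1 \<le> k" "k \<le> n" "h k = Flat"
        using False i mirror_symmetricD[OF sym, of i] by (auto simp: k_def)
      then have "height_at h (k - 1) = 0"
        using Flat_low[of k] height_at_Suc[of h "k - 1"] by simp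
      then show ?thesis
        using reflect[of "k - 1"] k i by (simp add: k_def)
    qed (use Flat_low i in simp)
    show "occurrences h Up (2 * n) = occurrences h Down (2 * n)"
      using end_height by (simp add: height_at_def)
  qed
qed

text \<open>The first half is read off \<open>r\<close>, which stores the last step first; the second half
  is forced by mirror symmetry.\<close>

definition unfold_half :: "nat \<Rightarrow> step list \<Rightarrow> nat \<Rightarrow> step" where
  "unfold_half n r i = (if i \<le> n then r ! (n - i) else mirror (r ! (i - n - 1)))"

lemma word_unfold_half:
  assumes "length r = n"
  shows "word (unfold_half n r) n = r"
proof -
  have "k \<le> n \<Longrightarrow> word (unfold_half n r) k = drop (n - k) r" for k
  proof (induction k)
    case (Suc k)
    then have "n - k = Suc (n - Suc k)"
      by simp
    then show ?case
      using Suc Cons_nth_drop_Suc[of "n - Suc k" r] assms by (simp add: unfold_half_def)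
  qed (simp add: assms)
  then show ?thesis
    by simp
qed

lemma mirror_symmetric_unfold_half: "mirror_symmetric (2 * n) (unfold_half n r)"
  by (auto simp: mirror_symmetric_def unfold_half_def)

lemma balanced_path_unfold_half: "r \<in> half_paths n \<Longrightarrow> balanced_path (2 * n) (unfold_half n r)"
  by (rule balanced_path_if_mirror_symmetric)
    (simp_all add: mirror_symmetric_unfold_half word_unfold_half half_paths_def)

lemma involution321_if_cent_inv_321: "p \<in> cent_inv_321 m \<Longrightarrow> involution321 m p"
  by unfold_locales (auto simp: cent_inv_321_def)

lemma mirror_symmetric_step_type:
  assumes "p \<in> cent_inv_321 m"
  shows "mirror_symmetric m (step_type p)"
  unfolding mirror_symmetric_def
proof
  fix i assume i: "i \<in> {1..m}"
  have "p permutes {1..m}" "p i + p (m + 1 - i) = m + 1"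
    using assms i by (auto simp: cent_inv_321_def centrosymmetric_def)
  moreover have "p i \<in> {1..m}"
    using permutes_in_image[OF \<open>p permutes {1..m}\<close>] i by auto
  ultimately show "step_type p (m + 1 - i) = mirror (step_type p i)"
    using i by (auto simp: step_type_def)
qed

lemma des_eq_weight:
  assumes p: "p \<in> cent_inv_321 (2 * n)" and "n \<ge> 1"
  shows "des (2 * n) p = weight (word (step_type p) n)"
proof -
  interpret involution321 "2 * n" p
    by (rule involution321_if_cent_inv_321[OF p])
  have "{i. 1 \<le> i \<and> i \<le> 2 * n - 1 \<and> p (i + 1) < p i} = peak_positions (step_type p) (2 * n)"
    using descent_iff_peak by (auto simp: peak_positions_def)
  then have "des (2 * n) p = card (peak_positions (step_type p) (2 * n))"
    by (simp add: des_def)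
  also have "\<dots> = weight (word (step_type p) n)"
    using card_peak_positions_mirror_symmetric[OF mirror_symmetric_step_type[OF p] \<open>n \<ge> 1\<close>] \<open>n \<ge> 1\<close>
    by (simp add: weight_def peaks_word ends_up_word)
  finally show ?thesis .
qed

lemma step_type_cent_inv_321_determined_by_half:
  assumes p: "p \<in> cent_inv_321 (2 * n)" and s: "s \<in> cent_inv_321 (2 * n)"
    and same_half: "\<And>i. 1 \<le> i \<Longrightarrow> i \<le> n \<Longrightarrow> step_type p i = step_type s i"
  shows "step_type p i = step_type s i"
proof -
  consider "1 \<le> i \<and> i \<le> n" | "n < i \<and> i \<le> 2 * n" | "i \<notin> {1..2 * n}"
    by force
  then show ?thesis
  proof cases
    case 2
    define k where "k = 2 * n + 1 - i"
    have "1 \<le> k" "k \<le> n" "i = 2 * n + 1 - k"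
      using 2 by (auto simp: k_def)
    then show ?thesis
      using mirror_symmetricD[OF mirror_symmetric_step_type[OF p], of k]
        mirror_symmetricD[OF mirror_symmetric_step_type[OF s], of k] same_half[of k] by simp
  next
    case 3
    then have "p i = i" "s i = i"
      using p s permutes_not_in[of p "{1..2 * n}" i] permutes_not_in[of s "{1..2 * n}" i]
      by (auto simp: cent_inv_321_def)
    then show ?thesis
      by (simp add: step_type_def)
  qed (use same_half in simp)
qed

lemma bij_betw_word_step_type:
  "bij_betw (\<lambda>p. word (step_type p) n) (cent_inv_321 (2 * n)) (half_paths n)"
  unfolding bij_betw_def
proof (intro conjI equalityI subsetI)
  show "inj_on (\<lambda>p. word (step_type p) n) (cent_inv_321 (2 * n))"
  proof (rule inj_onI)
    fix p s assume p: "p \<in> cent_inv_321 (2 * n)" and s: "s \<in> cent_inv_321 (2 * n)"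
      and "word (step_type p) n = word (step_type s) n"
    then have "step_type p i = step_type s i" for i
      using step_type_cent_inv_321_determined_by_half word_eq_imp_eq by blast
    then show "p = s"
      using involution321_eq_if_step_type_eq involution321_if_cent_inv_321 p s by blast
  qed
  show "r \<in> half_paths n" if "r \<in> (\<lambda>p. word (step_type p) n) ` cent_inv_321 (2 * n)" for r
    using that involution321.admissible_word_step_type[OF involution321_if_cent_inv_321]
    by (auto simp: half_paths_def)
  show "r \<in> (\<lambda>p. word (step_type p) n) ` cent_inv_321 (2 * n)" if r: "r \<in> half_paths n" for r
  proof
    interpret balanced_path "2 * n" "unfold_half n r"
      by (rule balanced_path_unfold_half[OF r])
    show "mate (2 * n) (unfold_half n r) \<in> cent_inv_321 (2 * n)"
      unfolding cent_inv_321_def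
      using mate_permutes involution_mate avoids321_mate
        centrosymmetric_mate[OF mirror_symmetric_unfold_half] by simp
    have "word (step_type (mate (2 * n) (unfold_half n r))) n = word (unfold_half n r) n"
      by (rule word_cong) (simp add: step_type_mate)
    then show "r = word (step_type (mate (2 * n) (unfold_half n r))) n"
      using r by (simp add: word_unfold_half half_paths_def)
  qed
qed

theorem mainTheorem3:
  fixes n :: nat and q :: "'a :: comm_ring_1"
  assumes "n \<ge> 1"
  shows "(\<Sum>p\<in>cent_inv_321 (2 * n). q ^ des (2 * n) p) = (1 + q) ^ n"
proof -
  have "(\<Sum>p\<in>cent_inv_321 (2 * n). q ^ des (2 * n) p)
      = (\<Sum>p\<in>cent_inv_321 (2 * n). q ^ weight (word (step_type p) n))"
    using des_eq_weight[OF _ assms] by simp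
  also have "\<dots> = (\<Sum>r\<in>half_paths n. q ^ weight r)"
    by (rule sum.reindex_bij_betw[OF bij_betw_word_step_type])
  also have "\<dots> = (1 + q) ^ n"
    by (rule sum_weight_half_paths)
  finally show ?thesis .
qed

end
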